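(* Let $\mathfrak{A}$ be a $(k,p,q)$-differential subalgebra of the $C^*$-algebra $\mathfrak{B}$. Then for every $a=a^*\in\mathfrak{A}$ and every $\tau>\log_k(\max\{k-1,p\})$ one has $$\|u(ta)\|_{\mathfrak{A}}=O(e^{|t|^\tau})\quad\text{as } |t|\to\infty,\ t\in\mathbb{R}.$$
   Context: Let $\mathfrak{B}$ be a $C^*$-algebra with norm $\|\cdot\|_{\mathfrak{B}}$. A $(k,p,q)$-differential subalgebra of $\mathfrak{B}$ is a $*$-subalgebra $\mathfrak{A}\subseteq\mathfrak{B}$ equipped with its own norm $\|\cdot\|_{\mathfrak{A}}$ making it a Banach $*$-algebra on which the involution is continuous, where $k\in\mathbb{Z}$, $k\geq 2$, and $p,q>0$ are reals with $p+q=k$, such that for some constant $C>0$, $\|a^k\|_{\mathfrak{A}}\leq C\|a\|_{\mathfrak{A}}^p\|a\|_{\mathfrak{B}}^q$ for all $a\in\mathfrak{A}$. For $b\in\mathfrak{A}$, $u(b)=e^{ib}-1=\sum_{j=1}^\infty \frac{i^j b^j}{j!}\in\mathfrak{A}$ (norm-convergent series in $\mathfrak{A}$). *)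

theory Defs
  imports "HOL-Analysis.Analysis"
begin

text \<open>Complex Banach algebras are encoded as real Banach algebras ('b :: {real_normed_algebra, banach},
  not necessarily unital) together with a map J = multiplication by the imaginary unit.\<close>

definition cscale :: "('b::real_vector \<Rightarrow> 'b) \<Rightarrow> complex \<Rightarrow> 'b \<Rightarrow> 'b" where
  "cscale J c x = Re c *\<^sub>R x + Im c *\<^sub>R J x"

text \<open>Positive powers in a possibly non-unital algebra: spow a n = a^(n+1).\<close>
fun spow :: "'a::times \<Rightarrow> nat \<Rightarrow> 'a" where
  "spow a 0 = a"
| "spow a (Suc n) = a * spow a n"

definition cstar_algebra :: "('b::{real_normed_algebra,banach} \<Rightarrow> 'b) \<Rightarrow> ('b \<Rightarrow> 'b) \<Rightarrow> bool" where
  "cstar_algebra J st \<longleftrightarrow>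
     (\<forall>x y. J (x + y) = J x + J y) \<and> (\<forall>r x. J (r *\<^sub>R x) = r *\<^sub>R J x) \<and>
     (\<forall>x. J (J x) = - x) \<and>
     (\<forall>c x. norm (cscale J c x) = cmod c * norm x) \<and>
     (\<forall>x y. J (x * y) = J x * y \<and> J (x * y) = x * J y) \<and>
     (\<forall>x y. st (x + y) = st x + st y) \<and> (\<forall>r x. st (r *\<^sub>R x) = r *\<^sub>R st x) \<and>
     (\<forall>x. st (J x) = - J (st x)) \<and> (\<forall>x. st (st x) = x) \<and>
     (\<forall>x y. st (x * y) = st y * st x) \<and>
     (\<forall>x. norm (st x * x) = (norm x)\<^sup>2)"

definition banach_star_subalgebra ::
  "('b::{real_normed_algebra,banach} \<Rightarrow> 'b) \<Rightarrow> ('b \<Rightarrow> 'b) \<Rightarrow> 'b set \<Rightarrow> ('b \<Rightarrow> real) \<Rightarrow> bool" where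
  "banach_star_subalgebra J st A nA \<longleftrightarrow>
     0 \<in> A \<and> (\<forall>x\<in>A. \<forall>y\<in>A. x + y \<in> A \<and> x * y \<in> A) \<and>
     (\<forall>c. \<forall>x\<in>A. cscale J c x \<in> A) \<and> (\<forall>x\<in>A. st x \<in> A) \<and>
     (\<forall>x\<in>A. nA x = 0 \<longleftrightarrow> x = 0) \<and>
     (\<forall>x\<in>A. \<forall>y\<in>A. nA (x + y) \<le> nA x + nA y) \<and>
     (\<forall>c. \<forall>x\<in>A. nA (cscale J c x) = cmod c * nA x) \<and>
     (\<forall>x\<in>A. \<forall>y\<in>A. nA (x * y) \<le> nA x * nA y) \<and>
     (\<forall>X. (\<forall>n. X n \<in> A) \<and> (\<forall>e>0. \<exists>N. \<forall>m\<ge>N. \<forall>n\<ge>N. nA (X m - X n) < e)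
          \<longrightarrow> (\<exists>L\<in>A. (\<lambda>n. nA (X n - L)) \<longlonglongrightarrow> 0)) \<and>
     (\<exists>C. \<forall>x\<in>A. nA (st x) \<le> C * nA x)"

definition differential_subalgebra ::
  "('b::{real_normed_algebra,banach} \<Rightarrow> 'b) \<Rightarrow> ('b \<Rightarrow> 'b) \<Rightarrow> 'b set \<Rightarrow> ('b \<Rightarrow> real)
    \<Rightarrow> nat \<Rightarrow> real \<Rightarrow> real \<Rightarrow> bool" where
  "differential_subalgebra J st A nA k p q \<longleftrightarrow>
     cstar_algebra J st \<and> banach_star_subalgebra J st A nA \<and>
     k \<ge> 2 \<and> p > 0 \<and> q > 0 \<and> p + q = real k \<and>
     (\<exists>C>0. \<forall>a\<in>A. nA (spow a (k - 1)) \<le> C * nA a powr p * norm a powr q)"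

text \<open>u(b) = e^{ib} - 1 = sum_{j>=1} i^j b^j / j!, the limit being taken in the A-norm.\<close>
definition uA :: "('b::{real_normed_algebra,banach} \<Rightarrow> 'b) \<Rightarrow> 'b set \<Rightarrow> ('b \<Rightarrow> real) \<Rightarrow> 'b \<Rightarrow> 'b" where
  "uA J A nA b = (THE x. x \<in> A \<and>
     (\<lambda>n. nA ((\<Sum>j=1..n. cscale J (\<i> ^ j / of_nat (fact j)) (spow b (j - 1))) - x)) \<longlonglongrightarrow> 0)"

end

theory Submission
  imports Defs
begin

(*
  For self-adjoint a, 1 + u(ta) = e^(ita) is a one-parameter group of unitaries: u(s + t) =
  u(s) + u(t) + u(s) u(t) and u(t)* = u(-t), so the C*-identity gives norm (u(ta)) <= 2.
  Expanding (1 + u(ta))^k = 1 + u(kta) binomially, u(kta) differs from u(ta)^k by terms of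
  A-norm at most (2^k - 2) N(t)^(k-1), where N(t) = max 1 (nA (u(ta))), while the differential
  inequality bounds nA (u(ta)^k) by C N(t)^p 2^q. Hence N(kt) <= D N(t)^R with R = max (k-1) p.
  Iterating this dilation inequality, starting from N(t) <= exp (|t| nA a) on |t| < k, gives
  ln N(t) = O(|t|^sigma) for every sigma > log_k R.
*)

lemma spow_mult: "spow (x::'a::semigroup_mult) m * spow x n = spow x (m + n + 1)"
  by (induction m) (auto simp: mult.assoc)

lemma spow_scaleR: "spow (r *\<^sub>R x) n = r ^ Suc n *\<^sub>R spow (x::'a::real_algebra) n"
  by (induction n) (auto simp: mult_scaleR_left mult_scaleR_right)

lemma sum_square_minus_sum_triangle:
  fixes f :: "nat \<Rightarrow> nat \<Rightarrow> 'a::ab_group_add"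
  shows "(\<Sum>i\<le>N. \<Sum>j\<le>N. f i j) - (\<Sum>n\<le>N. \<Sum>i\<le>n. f i (n - i))
       = (\<Sum>i\<le>N. \<Sum>j\<le>N. if N < i + j then f i j else 0)"
proof -
  have "(\<Sum>n\<le>N. \<Sum>i\<le>n. f i (n - i)) = (\<Sum>(i,j)\<in>{x \<in> {..N} \<times> {..N}. fst x + snd x \<le> N}. f i j)"
    by (subst sum.triangle_reindex_eq[symmetric]) (auto intro: sum.cong)
  also have "\<dots> = (\<Sum>i\<le>N. \<Sum>j\<le>N. if i + j \<le> N then f i j else 0)"
    by (simp add: sum.inter_filter sum.cartesian_product split_def)
  finally have triangle: "(\<Sum>n\<le>N. \<Sum>i\<le>n. f i (n - i)) = \<dots>" .
  show ?thesis
    unfolding triangle sum_subtractf[symmetric] by (intro sum.cong refl) auto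
qed

section \<open>Convergence in the norm of the subalgebra\<close>

locale cstar_subalgebra =
  fixes J st :: "'a::{real_normed_algebra,banach} \<Rightarrow> 'a"
    and A :: "'a set" and nA :: "'a \<Rightarrow> real"
  assumes cstar: "cstar_algebra J st"
    and subalgebra: "banach_star_subalgebra J st A nA"
begin

lemma J_add: "J (x + y) = J x + J y"
  and J_scaleR: "J (r *\<^sub>R x) = r *\<^sub>R J x"
  and J_J: "J (J x) = - x"
  and st_add: "st (x + y) = st x + st y"
  and st_scaleR: "st (r *\<^sub>R x) = r *\<^sub>R st x"
  and st_J: "st (J x) = - J (st x)"
  and st_st: "st (st x) = x"
  and st_mult: "st (x * y) = st y * st x"
  and norm_st_mult_self: "norm (st x * x) = (norm x)\<^sup>2"
  using cstar unfolding cstar_algebra_def by simp_all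

lemma J_mult_left: "J (x * y) = J x * y"
  and J_mult_right: "J (x * y) = x * J y"
  using cstar unfolding cstar_algebra_def by blast+

lemma zero_in_A: "0 \<in> A"
  and add_in_A: "x \<in> A \<Longrightarrow> y \<in> A \<Longrightarrow> x + y \<in> A"
  and mult_in_A: "x \<in> A \<Longrightarrow> y \<in> A \<Longrightarrow> x * y \<in> A"
  and cscale_in_A: "x \<in> A \<Longrightarrow> cscale J c x \<in> A"
  and st_in_A: "x \<in> A \<Longrightarrow> st x \<in> A"
  and nA_eq_0_iff: "x \<in> A \<Longrightarrow> nA x = 0 \<longleftrightarrow> x = 0"
  and nA_triangle: "x \<in> A \<Longrightarrow> y \<in> A \<Longrightarrow> nA (x + y) \<le> nA x + nA y"
  and nA_cscale: "x \<in> A \<Longrightarrow> nA (cscale J c x) = cmod c * nA x"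
  and nA_mult: "x \<in> A \<Longrightarrow> y \<in> A \<Longrightarrow> nA (x * y) \<le> nA x * nA y"
  and nA_complete: "\<lbrakk>\<forall>n. X n \<in> A; \<forall>e>0. \<exists>N. \<forall>m\<ge>N. \<forall>n\<ge>N. nA (X m - X n) < e\<rbrakk>
      \<Longrightarrow> \<exists>L\<in>A. (\<lambda>n. nA (X n - L)) \<longlonglongrightarrow> 0"
  and nA_st_bounded: "\<exists>C. \<forall>x\<in>A. nA (st x) \<le> C * nA x"
  using subalgebra unfolding banach_star_subalgebra_def by simp_all

lemma st_zero: "st 0 = 0"
  using st_scaleR[of 0 0] by simp

lemma st_sum: "st (sum f S) = (\<Sum>i\<in>S. st (f i))"
  by (induction S rule: infinite_finite_induct) (auto simp: st_zero st_add)

lemma st_diff: "st (x - y) = st x - st y"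
  using st_add[of x "- y"] st_scaleR[of "-1" y] by simp

lemma cscale_zero_left: "cscale J 0 x = 0"
  by (simp add: cscale_def)

lemma cscale_minus_one: "cscale J (-1) x = - x"
  by (simp add: cscale_def)

lemma cscale_sum_left: "cscale J (sum f S) x = (\<Sum>i\<in>S. cscale J (f i) x)"
  by (induction S rule: infinite_finite_induct)
    (auto simp: cscale_zero_left cscale_def algebra_simps)

lemma cscale_scaleR: "cscale J c (r *\<^sub>R x) = cscale J (c * of_real r) x"
  by (simp add: cscale_def J_scaleR)

lemma cscale_mult_cscale: "cscale J c x * cscale J d y = cscale J (c * d) (x * y)"
  by (simp add: cscale_def algebra_simps J_mult_left[symmetric] J_mult_right[symmetric]
      J_J J_scaleR J_add)

lemma st_cscale: "st (cscale J c x) = cscale J (cnj c) (st x)"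
  by (simp add: cscale_def st_add st_scaleR st_J)

lemma norm_st: "norm (st x) = norm x"
proof -
  have le: "norm y \<le> norm (st y)" for y
  proof (cases "y = 0")
    case False
    have "(norm y)\<^sup>2 \<le> norm (st y) * norm y"
      using norm_st_mult_self[of y] norm_mult_ineq[of "st y" y] by simp
    then show ?thesis using False by (simp add: power2_eq_square)
  qed simp
  show ?thesis using le[of x] le[of "st x"] st_st by simp
qed

lemma minus_in_A: "x \<in> A \<Longrightarrow> - x \<in> A"
  using cscale_in_A[of x "-1"] by (simp add: cscale_minus_one)

lemma diff_in_A: "x \<in> A \<Longrightarrow> y \<in> A \<Longrightarrow> x - y \<in> A"
  using add_in_A[of x "- y"] minus_in_A by simp

lemma sum_in_A: "(\<And>i. i \<in> S \<Longrightarrow> f i \<in> A) \<Longrightarrow> sum f S \<in> A"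
  by (induction S rule: infinite_finite_induct) (auto simp: zero_in_A add_in_A)

lemma spow_in_A: "x \<in> A \<Longrightarrow> spow x n \<in> A"
  by (induction n) (auto simp: mult_in_A)

lemma nA_zero: "nA 0 = 0"
  using nA_eq_0_iff zero_in_A by blast

lemma nA_minus: "x \<in> A \<Longrightarrow> nA (- x) = nA x"
  using nA_cscale[of x "-1"] by (simp add: cscale_minus_one)

lemma nA_minus_commute: "x \<in> A \<Longrightarrow> y \<in> A \<Longrightarrow> nA (x - y) = nA (y - x)"
  using nA_minus[of "y - x"] diff_in_A by simp

lemma nA_nonneg: "x \<in> A \<Longrightarrow> 0 \<le> nA x"
  using nA_triangle[of x "- x"] nA_minus[of x] minus_in_A[of x] nA_zero by simp

lemma nA_triangle_diff: "x \<in> A \<Longrightarrow> y \<in> A \<Longrightarrow> nA (x - y) \<le> nA x + nA y"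
  using nA_triangle[of x "- y"] nA_minus[of y] minus_in_A[of y] by simp

lemma nA_sum_le: "(\<And>i. i \<in> S \<Longrightarrow> f i \<in> A) \<Longrightarrow> nA (sum f S) \<le> (\<Sum>i\<in>S. nA (f i))"
proof (induction S rule: infinite_finite_induct)
  case (insert x F)
  then show ?case
    using nA_triangle[of "f x" "sum f F"] sum_in_A[of F f] by fastforce
qed (auto simp: nA_zero)

lemma nA_spow_le: "x \<in> A \<Longrightarrow> nA (spow x n) \<le> nA x ^ Suc n"
proof (induction n)
  case (Suc n)
  have "nA (spow x (Suc n)) \<le> nA x * nA (spow x n)"
    using nA_mult Suc spow_in_A by simp
  also have "\<dots> \<le> nA x * nA x ^ Suc n"
    using Suc nA_nonneg by (simp add: mult_left_mono)
  finally show ?case by simp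
qed simp

text \<open>The norm of the type is that of the C*-algebra; limits in A are taken in nA.\<close>

definition A_tendsto :: "(nat \<Rightarrow> 'a) \<Rightarrow> 'a \<Rightarrow> bool" where
  "A_tendsto X L \<longleftrightarrow> (\<forall>n. X n \<in> A) \<and> L \<in> A \<and> (\<lambda>n. nA (X n - L)) \<longlonglongrightarrow> 0"

lemma A_tendsto_unique:
  assumes "A_tendsto X L" and "A_tendsto X M"
  shows "L = M"
proof -
  have in_A: "L \<in> A" "M \<in> A" "X n \<in> A" for n
    using assms by (auto simp: A_tendsto_def)
  have "nA (L - M) \<le> nA (X n - M) + nA (X n - L)" for n
    using nA_triangle_diff[of "X n - M" "X n - L"] in_A diff_in_A by (simp add: algebra_simps)
  moreover have "(\<lambda>n. nA (X n - M) + nA (X n - L)) \<longlonglongrightarrow> 0 + 0"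
    using assms by (intro tendsto_add) (auto simp: A_tendsto_def)
  ultimately have "nA (L - M) \<le> 0"
    by (intro LIMSEQ_le_const) auto
  then have "nA (L - M) = 0"
    using nA_nonneg[of "L - M"] in_A diff_in_A by simp
  then show ?thesis
    using nA_eq_0_iff[of "L - M"] in_A diff_in_A by simp
qed

lemma A_tendsto_transform:
  assumes "A_tendsto Y L" and "\<And>n. X n \<in> A" and "(\<lambda>n. nA (X n - Y n)) \<longlonglongrightarrow> 0"
  shows "A_tendsto X L"
proof -
  have in_A: "L \<in> A" "Y n \<in> A" "X n - Y n \<in> A" "Y n - L \<in> A" for n
    using assms diff_in_A by (auto simp: A_tendsto_def)
  have "(\<lambda>n. nA (X n - L)) \<longlonglongrightarrow> 0"
  proof (rule Lim_null_comparison)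
    have "nA (X n - L) \<le> nA (X n - Y n) + nA (Y n - L)" for n
      using nA_triangle[OF in_A(3)[of n] in_A(4)[of n]] by simp
    then show "\<forall>\<^sub>F n in sequentially. norm (nA (X n - L)) \<le> nA (X n - Y n) + nA (Y n - L)"
      using nA_nonneg assms(2) in_A(1) diff_in_A by (intro always_eventually) auto
    show "(\<lambda>n. nA (X n - Y n) + nA (Y n - L)) \<longlonglongrightarrow> 0"
      using tendsto_add[OF assms(3)] assms(1) by (force simp: A_tendsto_def)
  qed
  then show ?thesis
    using assms in_A by (simp add: A_tendsto_def)
qed

lemma A_tendsto_add:
  assumes "A_tendsto X L" and "A_tendsto Y M"
  shows "A_tendsto (\<lambda>n. X n + Y n) (L + M)"
proof -
  have in_A: "X n - L \<in> A" "Y n - M \<in> A" for n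
    using assms diff_in_A by (auto simp: A_tendsto_def)
  have "(\<lambda>n. nA (X n + Y n - (L + M))) \<longlonglongrightarrow> 0"
  proof (rule Lim_null_comparison)
    show "\<forall>\<^sub>F n in sequentially. norm (nA (X n + Y n - (L + M))) \<le> nA (X n - L) + nA (Y n - M)"
      using nA_triangle[OF in_A] nA_nonneg[OF add_in_A[OF in_A]]
      by (intro always_eventually) (auto simp: algebra_simps)
    show "(\<lambda>n. nA (X n - L) + nA (Y n - M)) \<longlonglongrightarrow> 0"
      using tendsto_add assms unfolding A_tendsto_def by force
  qed
  then show ?thesis
    using assms add_in_A by (simp add: A_tendsto_def)
qed

lemma A_tendsto_mult:
  assumes "A_tendsto X L" and "A_tendsto Y M"
  shows "A_tendsto (\<lambda>n. X n * Y n) (L * M)"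
proof -
  have in_A: "L \<in> A" "M \<in> A" "Y n \<in> A" "X n - L \<in> A" "Y n - M \<in> A" for n
    using assms diff_in_A by (auto simp: A_tendsto_def)
  have lim: "(\<lambda>n. nA (X n - L)) \<longlonglongrightarrow> 0" "(\<lambda>n. nA (Y n - M)) \<longlonglongrightarrow> 0"
    using assms by (auto simp: A_tendsto_def)
  have "(\<lambda>n. nA (X n * Y n - L * M)) \<longlonglongrightarrow> 0"
  proof (rule Lim_null_comparison)
    show "\<forall>\<^sub>F n in sequentially.
        norm (nA (X n * Y n - L * M)) \<le> nA (X n - L) * (nA (Y n - M) + nA M) + nA L * nA (Y n - M)"
    proof (intro always_eventually allI)
      fix n
      have "X n * Y n - L * M = (X n - L) * Y n + L * (Y n - M)"
        by (simp add: algebra_simps)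
      then have "nA (X n * Y n - L * M) \<le> nA ((X n - L) * Y n) + nA (L * (Y n - M))"
        using nA_triangle in_A mult_in_A by simp
      also have "\<dots> \<le> nA (X n - L) * nA (Y n) + nA L * nA (Y n - M)"
        using nA_mult in_A by (intro add_mono) auto
      also have "\<dots> \<le> nA (X n - L) * (nA (Y n - M) + nA M) + nA L * nA (Y n - M)"
        using nA_triangle[of "Y n - M" M] nA_nonneg in_A by (intro add_mono mult_left_mono) auto
      finally show "norm (nA (X n * Y n - L * M)) \<le> \<dots>"
        using nA_nonneg diff_in_A mult_in_A in_A assms by (simp add: A_tendsto_def)
    qed
    show "(\<lambda>n. nA (X n - L) * (nA (Y n - M) + nA M) + nA L * nA (Y n - M)) \<longlonglongrightarrow> 0"
      using tendsto_add[OF tendsto_mult[OF lim(1) tendsto_add[OF lim(2) tendsto_const]]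
          tendsto_mult[OF tendsto_const lim(2)]]
      by simp
  qed
  then show ?thesis
    using assms mult_in_A by (simp add: A_tendsto_def)
qed

lemma A_tendsto_st:
  assumes "A_tendsto X L"
  shows "A_tendsto (\<lambda>n. st (X n)) (st L)"
proof -
  obtain C where C: "\<And>x. x \<in> A \<Longrightarrow> nA (st x) \<le> C * nA x"
    using nA_st_bounded by blast
  have in_A: "X n - L \<in> A" for n
    using assms diff_in_A by (auto simp: A_tendsto_def)
  have "(\<lambda>n. nA (st (X n) - st L)) \<longlonglongrightarrow> 0"
  proof (rule Lim_null_comparison)
    show "\<forall>\<^sub>F n in sequentially. norm (nA (st (X n) - st L)) \<le> \<bar>C\<bar> * nA (X n - L)"
    proof (intro always_eventually allI)
      fix n
      have "nA (st (X n) - st L) \<le> C * nA (X n - L)"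
        using C[OF in_A] by (simp add: st_diff)
      also have "\<dots> \<le> \<bar>C\<bar> * nA (X n - L)"
        using nA_nonneg[OF in_A] by (intro mult_right_mono) auto
      finally show "norm (nA (st (X n) - st L)) \<le> \<bar>C\<bar> * nA (X n - L)"
        using nA_nonneg[OF st_in_A[OF in_A]] by (simp add: st_diff)
    qed
    show "(\<lambda>n. \<bar>C\<bar> * nA (X n - L)) \<longlonglongrightarrow> 0"
      using tendsto_mult_right_zero assms by (auto simp: A_tendsto_def)
  qed
  then show ?thesis
    using assms st_in_A by (simp add: A_tendsto_def)
qed

lemma nA_le_of_A_tendsto:
  assumes "A_tendsto X L" and "\<And>n. nA (X n) \<le> B"
  shows "nA L \<le> B"
proof -
  have "nA L \<le> B + nA (X n - L)" for n
  proof -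
    have "X n \<in> A" "X n - L \<in> A"
      using assms diff_in_A by (auto simp: A_tendsto_def)
    then show ?thesis
      using nA_triangle_diff[of "X n" "X n - L"] assms(2)[of n] by simp
  qed
  moreover have "(\<lambda>n. B + nA (X n - L)) \<longlonglongrightarrow> B + 0"
    using assms by (intro tendsto_add) (auto simp: A_tendsto_def)
  ultimately show ?thesis
    by (intro LIMSEQ_le_const) auto
qed

lemma nA_diff_partial_sums_le:
  fixes y :: "nat \<Rightarrow> 'a" and m n :: nat
  assumes "\<And>j. y j \<in> A" and "n \<le> m"
  shows "nA ((\<Sum>j\<le>m. y j) - (\<Sum>j\<le>n. y j)) \<le> (\<Sum>j\<le>m. nA (y j)) - (\<Sum>j\<le>n. nA (y j))"
proof -
  have split: "(\<Sum>j\<le>m. f j) - (\<Sum>j\<le>n. f j) = (\<Sum>j\<in>{..m} - {..n}. f j)"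
    for f :: "nat \<Rightarrow> 'c::ab_group_add"
    using assms(2) by (simp add: sum_diff)
  show ?thesis
    unfolding split by (rule nA_sum_le) (use assms(1) in blast)
qed

lemma ex_A_tendsto_partial_sums:
  assumes y: "\<And>j. y j \<in> A" and summable: "summable (\<lambda>j. nA (y j))"
  shows "\<exists>L. A_tendsto (\<lambda>n. \<Sum>j\<le>n. y j) L"
proof -
  define X where "X n = (\<Sum>j\<le>n. y j)" for n
  define S where "S n = (\<Sum>j\<le>n. nA (y j))" for n
  have X_in_A: "X n \<in> A" for n
    unfolding X_def by (rule sum_in_A) (rule y)
  have le: "nA (X m - X n) \<le> \<bar>S m - S n\<bar>" for m n
  proof (cases "n \<le> m")
    case True
    then show ?thesis
      using nA_diff_partial_sums_le[of y n m] y unfolding X_def S_def by simp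
  next
    case False
    then show ?thesis
      using nA_diff_partial_sums_le[of y m n] y nA_minus_commute[OF X_in_A X_in_A, of m n]
      unfolding X_def S_def by simp
  qed
  have "Cauchy S"
    unfolding S_def using summable_LIMSEQ'[OF summable] by (rule LIMSEQ_imp_Cauchy)
  have "\<exists>N. \<forall>m\<ge>N. \<forall>n\<ge>N. nA (X m - X n) < e" if e: "e > 0" for e
  proof -
    obtain N where "\<forall>m\<ge>N. \<forall>n\<ge>N. \<bar>S m - S n\<bar> < e"
      using CauchyD[OF \<open>Cauchy S\<close> e] by auto
    then show ?thesis
      using le order.strict_trans1 by blast
  qed
  then obtain L where "L \<in> A" "(\<lambda>n. nA (X n - L)) \<longlonglongrightarrow> 0"
    using nA_complete X_in_A by blast
  then show ?thesis
    using X_in_A unfolding A_tendsto_def X_def by blast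
qed

lemma A_tendsto_Cauchy_product:
  assumes x: "\<And>i. x i \<in> A" and y: "\<And>j. y j \<in> A"
    and summable: "summable (\<lambda>i. nA (x i))" "summable (\<lambda>j. nA (y j))"
    and L: "A_tendsto (\<lambda>N. \<Sum>i\<le>N. x i) L" and M: "A_tendsto (\<lambda>N. \<Sum>j\<le>N. y j) M"
  shows "A_tendsto (\<lambda>N. \<Sum>n\<le>N. \<Sum>i\<le>n. x i * y (n - i)) (L * M)"
proof -
  define P where "P = (\<lambda>N. (\<Sum>i\<le>N. x i) * (\<Sum>j\<le>N. y j))"
  define C where "C = (\<lambda>N. \<Sum>n\<le>N. \<Sum>i\<le>n. x i * y (n - i))"
  define \<alpha> where "\<alpha> i = nA (x i)" for i
  define \<beta> where "\<beta> j = nA (y j)" for j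
  define e where "e N = (\<Sum>i\<le>N. \<alpha> i) * (\<Sum>j\<le>N. \<beta> j) - (\<Sum>n\<le>N. \<Sum>i\<le>n. \<alpha> i * \<beta> (n - i))"
    for N
  have tail_in_A: "(if N < i + j then x i * y j else 0) \<in> A" for N i j
    using x y mult_in_A zero_in_A by simp
  have P_in_A: "P N \<in> A" and C_in_A: "C N \<in> A" for N
    unfolding P_def C_def using x y by (auto intro!: mult_in_A sum_in_A)
  have "nA (C N - P N) \<le> e N" for N
  proof -
    have "nA (C N - P N) = nA (P N - C N)"
      by (rule nA_minus_commute[OF C_in_A P_in_A])
    also have "P N - C N = (\<Sum>i\<le>N. \<Sum>j\<le>N. if N < i + j then x i * y j else 0)"
      unfolding P_def C_def sum_product by (rule sum_square_minus_sum_triangle)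
    also have "nA \<dots> \<le> (\<Sum>i\<le>N. nA (\<Sum>j\<le>N. if N < i + j then x i * y j else 0))"
      by (intro nA_sum_le sum_in_A tail_in_A)
    also have "\<dots> \<le> (\<Sum>i\<le>N. \<Sum>j\<le>N. nA (if N < i + j then x i * y j else 0))"
      using tail_in_A by (intro sum_mono nA_sum_le)
    also have "\<dots> \<le> (\<Sum>i\<le>N. \<Sum>j\<le>N. if N < i + j then \<alpha> i * \<beta> j else 0)"
      unfolding \<alpha>_def \<beta>_def using nA_mult x y by (intro sum_mono) (simp add: nA_zero)
    also have "\<dots> = e N"
      unfolding e_def sum_product by (rule sum_square_minus_sum_triangle[symmetric])
    finally show ?thesis .
  qed
  moreover have "e \<longlonglongrightarrow> 0"
  proof -
    have "(\<lambda>n. \<Sum>i\<le>n. \<alpha> i * \<beta> (n - i)) sums (suminf \<alpha> * suminf \<beta>)"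
      using summable nA_nonneg x y unfolding \<alpha>_def \<beta>_def
      by (intro Cauchy_product_sums) auto
    then have "e \<longlonglongrightarrow> suminf \<alpha> * suminf \<beta> - suminf \<alpha> * suminf \<beta>"
      unfolding e_def sums_def_le using summable unfolding \<alpha>_def \<beta>_def
      by (intro tendsto_diff tendsto_mult summable_LIMSEQ')
    then show ?thesis
      by simp
  qed
  ultimately have "(\<lambda>N. nA (C N - P N)) \<longlonglongrightarrow> 0"
    using nA_nonneg[OF diff_in_A[OF C_in_A P_in_A]] Lim_null_comparison[of "\<lambda>N. nA (C N - P N)" e]
    by (simp add: always_eventually)
  moreover have "A_tendsto P (L * M)"
    unfolding P_def using A_tendsto_mult[OF L M] .
  ultimately have "A_tendsto C (L * M)"
    using A_tendsto_transform C_in_A by blast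
  then show ?thesis
    unfolding C_def .
qed

end

section \<open>The path t \<mapsto> u(ta)\<close>

lemma exp_real_sums: "(\<lambda>n. x ^ n / fact n) sums exp (x::real)"
  using exp_converges[of x] by (simp add: divide_inverse mult.commute)

definition imag_exp_coeff :: "real \<Rightarrow> nat \<Rightarrow> complex" where
  "imag_exp_coeff t n = (\<i> * of_real t) ^ n /\<^sub>R fact n"

lemma norm_imag_exp_coeff: "cmod (imag_exp_coeff t n) = \<bar>t\<bar> ^ n / fact n"
  by (simp add: imag_exp_coeff_def norm_mult norm_power divide_inverse)

lemma imag_exp_coeff_add:
  "imag_exp_coeff (s + t) n = (\<Sum>i\<le>n. imag_exp_coeff s i * imag_exp_coeff t (n - i))"
  using exp_series_add_commuting[of "\<i> * of_real s" "\<i> * of_real t" n]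
  by (simp add: imag_exp_coeff_def distrib_left mult.commute)

locale cstar_subalgebra_selfadjoint = cstar_subalgebra +
  fixes a
  assumes a_in_A: "a \<in> A" and selfadjoint: "st a = a"
begin

text \<open>Term 0 is 0 rather than 1 since the algebra need not be unital.\<close>

definition exp_term :: "real \<Rightarrow> nat \<Rightarrow> 'a" where
  "exp_term t n = (if n = 0 then 0 else cscale J (imag_exp_coeff t n) (spow a (n - 1)))"

definition u :: "real \<Rightarrow> 'a" where
  "u t = uA J A nA (t *\<^sub>R a)"

lemma exp_term_in_A: "exp_term t n \<in> A"
  by (simp add: exp_term_def zero_in_A cscale_in_A spow_in_A a_in_A)

lemma nA_exp_term_le: "nA (exp_term t n) \<le> (\<bar>t\<bar> * nA a) ^ n / fact n"
proof (cases "n = 0")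
  case False
  have "nA (exp_term t n) = \<bar>t\<bar> ^ n / fact n * nA (spow a (n - 1))"
    using False by (simp add: exp_term_def nA_cscale spow_in_A a_in_A norm_imag_exp_coeff)
  also have "\<dots> \<le> \<bar>t\<bar> ^ n / fact n * nA a ^ n"
    using nA_spow_le[OF a_in_A, of "n - 1"] False by (intro mult_left_mono) auto
  finally show ?thesis
    by (simp add: power_mult_distrib)
qed (simp add: exp_term_def nA_zero)

lemma summable_nA_exp_term: "summable (\<lambda>n. nA (exp_term t n))"
proof (rule summable_comparison_test'[OF sums_summable[OF exp_real_sums]])
  show "norm (nA (exp_term t n)) \<le> (\<bar>t\<bar> * nA a) ^ n / fact n" for n
    using nA_exp_term_le nA_nonneg[OF exp_term_in_A] by simp
qed

lemma uA_partial_sum_eq: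
  "(\<Sum>j=1..n. cscale J (\<i> ^ j / of_nat (fact j)) (spow (t *\<^sub>R a) (j - 1))) = (\<Sum>j\<le>n. exp_term t j)"
proof -
  have "cscale J (\<i> ^ j / of_nat (fact j)) (spow (t *\<^sub>R a) (j - 1)) = exp_term t j"
    if "1 \<le> j" for j
  proof -
    have "\<i> ^ j / of_nat (fact j) * of_real (t ^ j) = imag_exp_coeff t j"
      by (simp add: imag_exp_coeff_def power_mult_distrib scaleR_conv_of_real field_simps)
    moreover have "spow (t *\<^sub>R a) (j - 1) = t ^ j *\<^sub>R spow a (j - 1)"
      using that spow_scaleR[of t a "j - 1"] by simp
    ultimately show ?thesis
      using that by (simp add: cscale_scaleR exp_term_def)
  qed
  then have "(\<Sum>j=1..n. cscale J (\<i> ^ j / of_nat (fact j)) (spow (t *\<^sub>R a) (j - 1)))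
      = (\<Sum>j=1..n. exp_term t j)"
    by (intro sum.cong) auto
  also have "\<dots> = (\<Sum>j\<le>n. exp_term t j)"
    using sum.atLeast_Suc_atMost[of 0 n "exp_term t"] by (simp add: atMost_atLeast0 exp_term_def)
  finally show ?thesis .
qed

lemma A_tendsto_u: "A_tendsto (\<lambda>n. \<Sum>j\<le>n. exp_term t j) (u t)"
proof -
  obtain L where L: "A_tendsto (\<lambda>n. \<Sum>j\<le>n. exp_term t j) L"
    using ex_A_tendsto_partial_sums[OF exp_term_in_A summable_nA_exp_term] by blast
  have "u t = L"
    unfolding u_def uA_def uA_partial_sum_eq
  proof (rule the_equality)
    show "L \<in> A \<and> (\<lambda>n. nA ((\<Sum>j\<le>n. exp_term t j) - L)) \<longlonglongrightarrow> 0"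
      using L by (simp add: A_tendsto_def)
    show "x = L" if "x \<in> A \<and> (\<lambda>n. nA ((\<Sum>j\<le>n. exp_term t j) - x)) \<longlonglongrightarrow> 0" for x
      using that L A_tendsto_unique[of "\<lambda>n. \<Sum>j\<le>n. exp_term t j" x L]
      unfolding A_tendsto_def by blast
  qed
  with L show ?thesis
    by simp
qed

lemma u_in_A: "u t \<in> A"
  using A_tendsto_u by (simp add: A_tendsto_def)

lemma nA_u_le: "nA (u t) \<le> exp (\<bar>t\<bar> * nA a)"
proof (rule nA_le_of_A_tendsto[OF A_tendsto_u])
  fix n
  have "nA (\<Sum>j\<le>n. exp_term t j) \<le> (\<Sum>j\<le>n. (\<bar>t\<bar> * nA a) ^ j / fact j)"
    using nA_sum_le[of "{..n}" "exp_term t"] exp_term_in_A nA_exp_term_le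
    by (meson order_trans sum_mono)
  also have "\<dots> \<le> exp (\<bar>t\<bar> * nA a)"
    using sum_le_suminf[OF sums_summable[OF exp_real_sums], of "{..n}"] nA_nonneg[OF a_in_A]
      sums_unique[OF exp_real_sums, of "\<bar>t\<bar> * nA a"]
    by simp
  finally show "nA (\<Sum>j\<le>n. exp_term t j) \<le> exp (\<bar>t\<bar> * nA a)" .
qed

lemma u_zero: "u 0 = 0"
proof -
  have "exp_term 0 j = 0" for j
    by (cases "j = 0") (simp_all add: exp_term_def imag_exp_coeff_def cscale_zero_left zero_power)
  then have "A_tendsto (\<lambda>n. \<Sum>j\<le>n. exp_term 0 j) 0"
    by (simp add: A_tendsto_def zero_in_A nA_zero)
  then show ?thesis
    using A_tendsto_u A_tendsto_unique by blast
qed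

lemma st_spow_a: "st (spow a n) = spow a n"
proof (induction n)
  case (Suc n)
  have "st (spow a (Suc n)) = spow a n * a"
    using Suc by (simp add: st_mult selfadjoint)
  also have "\<dots> = spow a (Suc n)"
    using spow_mult[of a n 0] by simp
  finally show ?case .
qed (simp add: selfadjoint)

lemma st_u: "st (u t) = u (- t)"
proof -
  have "st (exp_term t n) = exp_term (- t) n" for n
    by (simp add: exp_term_def st_zero st_cscale st_spow_a imag_exp_coeff_def)
  then have "(\<lambda>n. st (\<Sum>j\<le>n. exp_term t j)) = (\<lambda>n. \<Sum>j\<le>n. exp_term (- t) j)"
    by (simp add: st_sum)
  then have "A_tendsto (\<lambda>n. \<Sum>j\<le>n. exp_term (- t) j) (st (u t))"
    using A_tendsto_st[OF A_tendsto_u[of t]] by simp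
  then show ?thesis
    using A_tendsto_u A_tendsto_unique by blast
qed

lemma exp_term_add:
  "exp_term (s + t) n = exp_term s n + exp_term t n + (\<Sum>i\<le>n. exp_term s i * exp_term t (n - i))"
proof (cases "n = 0")
  case True
  then show ?thesis
    by (simp add: exp_term_def)
next
  case False
  have split: "cscale J (imag_exp_coeff s i * imag_exp_coeff t (n - i)) (spow a (n - 1))
      = (if i = 0 then exp_term t n else 0) + (if i = n then exp_term s n else 0)
        + exp_term s i * exp_term t (n - i)" if i_le: "i \<le> n" for i
  proof -
    consider "i = 0" | "i = n" | "0 < i" "i < n"
      using i_le by (metis le_neq_implies_less not_gr_zero)
    then show ?thesis
    proof cases
      case 3
      then have "i - 1 + (n - i - 1) + 1 = n - 1"
        by simp
      then have "spow a (i - 1) * spow a (n - i - 1) = spow a (n - 1)"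
        using spow_mult[of a "i - 1" "n - i - 1"] by (simp only:)
      then show ?thesis
        using 3 by (simp add: exp_term_def cscale_mult_cscale)
    qed (use False in \<open>simp_all add: exp_term_def imag_exp_coeff_def\<close>)
  qed
  have "exp_term (s + t) n
      = (\<Sum>i\<le>n. cscale J (imag_exp_coeff s i * imag_exp_coeff t (n - i)) (spow a (n - 1)))"
    using False by (simp add: exp_term_def imag_exp_coeff_add cscale_sum_left)
  also have "\<dots> = (\<Sum>i\<le>n. (if i = 0 then exp_term t n else 0) + (if i = n then exp_term s n else 0)
        + exp_term s i * exp_term t (n - i))"
    using split by (intro sum.cong) auto
  also have "\<dots> = exp_term s n + exp_term t n + (\<Sum>i\<le>n. exp_term s i * exp_term t (n - i))"
    by (simp add: sum.distrib)
  finally show ?thesis .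
qed

text \<open>This is (1 + u s)(1 + u t) = 1 + u (s + t), via the Cauchy product of the two series.\<close>

lemma u_add: "u (s + t) = u s + u t + u s * u t"
proof -
  have "(\<lambda>N. \<Sum>n\<le>N. exp_term (s + t) n) = (\<lambda>N. (\<Sum>n\<le>N. exp_term s n) + (\<Sum>n\<le>N. exp_term t n)
      + (\<Sum>n\<le>N. \<Sum>i\<le>n. exp_term s i * exp_term t (n - i)))"
    by (simp add: exp_term_add sum.distrib)
  moreover have "A_tendsto \<dots> (u s + u t + u s * u t)"
    by (intro A_tendsto_add A_tendsto_u A_tendsto_Cauchy_product exp_term_in_A
        summable_nA_exp_term)
  ultimately show ?thesis
    using A_tendsto_u A_tendsto_unique by metis
qed

lemma norm_u_le: "norm (u t) \<le> 2"
proof -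
  have "st (u t) * u t = - (u (- t) + u t)"
    using u_add[of "- t" t] u_zero st_u by (simp add: eq_neg_iff_add_eq_0 algebra_simps)
  then have "(norm (u t))\<^sup>2 = norm (u (- t) + u t)"
    using norm_st_mult_self[of "u t"] norm_minus_cancel by metis
  also have "\<dots> \<le> 2 * norm (u t)"
    using norm_triangle_ineq[of "u (- t)" "u t"] norm_st[of "u t"] st_u by simp
  finally show ?thesis
    by (cases "u t = 0") (auto simp: power2_eq_square)
qed

text \<open>Recall spow w n = w^(n+1). The difference collects the binomial terms of degree 1 to n of
  (1 + u t)^(n+1) - 1, whence the constant 2^(n+1) - 2.\<close>

lemma nA_u_mult_minus_spow_le:
  "nA (u (real (Suc n) * t) - spow (u t) n) \<le> (2 ^ Suc n - 2) * max 1 (nA (u t)) ^ n"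
proof (induction n)
  case 0
  then show ?case
    by (simp add: nA_zero)
next
  case (Suc n)
  define w where "w = u t"
  define F where "F = max 1 (nA w)"
  define \<delta> where "\<delta> = u (real (Suc n) * t) - spow w n"
  define \<beta> where "\<beta> = (2 ^ Suc n - 2) * F ^ n"
  have in_A: "w \<in> A" "spow w n \<in> A" "\<delta> \<in> A"
    unfolding \<delta>_def w_def by (auto intro: u_in_A spow_in_A diff_in_A)
  have F: "1 \<le> F" "nA w \<le> F"
    unfolding F_def by auto
  have \<delta>: "0 \<le> nA \<delta>" "nA \<delta> \<le> \<beta>"
    using nA_nonneg[OF in_A(3)] Suc.IH unfolding \<delta>_def \<beta>_def F_def w_def by auto
  have "u (real (Suc (Suc n)) * t) = u (real (Suc n) * t) + w + u (real (Suc n) * t) * w"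
    using u_add[of "real (Suc n) * t" t] unfolding w_def by (simp add: algebra_simps)
  also have "\<dots> = \<delta> + spow w n + w + \<delta> * w + spow w (Suc n)"
    using spow_mult[of w n 0] unfolding \<delta>_def by (simp add: algebra_simps)
  finally have "u (real (Suc (Suc n)) * t) - spow w (Suc n) = \<delta> + spow w n + w + \<delta> * w"
    by simp
  then have "nA (u (real (Suc (Suc n)) * t) - spow w (Suc n))
      \<le> nA \<delta> + nA (spow w n) + nA w + nA \<delta> * nA w"
    using in_A nA_triangle nA_mult add_in_A mult_in_A by (smt (verit))
  also have "\<dots> \<le> \<beta> + F ^ Suc n + F + \<beta> * F"
    using \<delta> F nA_spow_le[OF in_A(1), of n] power_mono[OF F(2) nA_nonneg[OF in_A(1)], of "Suc n"]
      nA_nonneg[OF in_A(1)]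
    by (intro add_mono mult_mono) auto
  also have "\<dots> \<le> (2 ^ Suc (Suc n) - 2) * F ^ Suc n"
  proof -
    have "\<beta> \<le> \<beta> * F" "F \<le> F ^ Suc n"
      using \<delta> F one_le_power[OF F(1), of n] by (auto intro: mult_le_cancel_left1[THEN iffD2])
    then show ?thesis
      unfolding \<beta>_def by (simp add: algebra_simps)
  qed
  finally show ?case
    unfolding w_def F_def .
qed

lemma max_1_nA_u_dilation_le:
  fixes k :: nat and p q C :: real
  assumes k: "2 \<le> k" and pq: "0 \<le> p" "0 \<le> q" and C: "0 \<le> C"
    and differential: "\<And>x. x \<in> A \<Longrightarrow> nA (spow x (k - 1)) \<le> C * nA x powr p * norm x powr q"
  shows "max 1 (nA (u (real k * t)))
    \<le> (2 ^ k + C * 2 powr q) * max 1 (nA (u t)) powr max (real k - 1) p"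
proof -
  define w where "w = u t"
  define F where "F = max 1 (nA w)"
  define R where "R = max (real k - 1) p"
  have w: "w \<in> A" "0 \<le> nA w" "norm w \<le> 2"
    unfolding w_def using u_in_A nA_nonneg norm_u_le by auto
  have F: "1 \<le> F" "nA w \<le> F" "1 \<le> F powr R"
    using k unfolding F_def R_def by (auto intro: ge_one_powr_ge_zero)
  have "nA (u (real k * t)) \<le> nA (u (real k * t) - spow w (k - 1)) + nA (spow w (k - 1))"
    using nA_triangle[of "u (real k * t) - spow w (k - 1)" "spow w (k - 1)"] w u_in_A spow_in_A
      diff_in_A by simp
  also have "\<dots> \<le> (2 ^ k - 2) * F ^ (k - 1) + C * nA w powr p * norm w powr q"
    using nA_u_mult_minus_spow_le[of "k - 1" t] differential[OF w(1)] k
    unfolding w_def F_def by (simp add: of_nat_diff)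
  also have "\<dots> \<le> (2 ^ k - 2) * F powr R + C * F powr R * 2 powr q"
  proof (intro add_mono mult_mono mult_left_mono)
    have "F ^ (k - 1) = F powr (real k - 1)"
      using F k powr_realpow[of F "k - 1"] by (simp add: of_nat_diff)
    also have "\<dots> \<le> F powr R"
      using F unfolding R_def by (intro powr_mono) auto
    finally show "F ^ (k - 1) \<le> F powr R" .
    have "nA w powr p \<le> F powr p"
      using w F pq by (intro powr_mono2) auto
    also have "\<dots> \<le> F powr R"
      using F unfolding R_def by (intro powr_mono) auto
    finally show "nA w powr p \<le> F powr R" .
    show "norm w powr q \<le> 2 powr q"
      using w pq by (intro powr_mono2) auto
    show "0 \<le> (2::real) ^ k - 2"
      using k power_increasing[of 1 k "2::real"] by simp
  qed (use C F in auto)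
  also have "\<dots> \<le> (2 ^ k + C * 2 powr q) * F powr R"
    by (simp add: algebra_simps)
  finally have "nA (u (real k * t)) \<le> (2 ^ k + C * 2 powr q) * F powr R" .
  moreover have "1 \<le> (2 ^ k + C * 2 powr q) * F powr R"
  proof -
    have "1 \<le> (2::real) ^ k + C * 2 powr q"
      using C one_le_power[of "2::real" k] by (simp add: add_increasing2)
    then show ?thesis
      using F(3) mult_mono[of 1 _ 1] by fastforce
  qed
  ultimately show ?thesis
    unfolding F_def R_def w_def by simp
qed

end

section \<open>Growth from a dilation inequality\<close>

lemma le_mult_powr_of_dilation_le:
  fixes h :: "real \<Rightarrow> real" and k \<sigma> H s :: real
  assumes k: "1 < k" and \<sigma>: "0 \<le> \<sigma>" and H: "0 \<le> H"
    and dilation: "\<And>t. h (k * t) \<le> k powr \<sigma> * h t"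
    and base: "\<And>s. 1 \<le> \<bar>s\<bar> \<Longrightarrow> \<bar>s\<bar> < k \<Longrightarrow> h s \<le> H"
    and s: "1 \<le> \<bar>s\<bar>"
  shows "h s \<le> H * \<bar>s\<bar> powr \<sigma>"
proof -
  obtain n where "\<bar>s\<bar> < k ^ n"
    using real_arch_pow[OF k] by blast
  with s show ?thesis
  proof (induction n arbitrary: s)
    case (Suc n)
    show ?case
    proof (cases "\<bar>s\<bar> < k")
      case True
      then have "h s \<le> H"
        using base Suc.prems by blast
      also have "\<dots> \<le> H * \<bar>s\<bar> powr \<sigma>"
        using H \<sigma> Suc.prems by (simp add: ge_one_powr_ge_zero mult_le_cancel_left1)
      finally show ?thesis .
    next
      case False
      have "1 \<le> \<bar>s / k\<bar>" "\<bar>s / k\<bar> < k ^ n"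
        using False Suc.prems k by (auto simp: field_simps)
      then have "h (s / k) \<le> H * \<bar>s / k\<bar> powr \<sigma>"
        by (rule Suc.IH)
      then have "h (k * (s / k)) \<le> k powr \<sigma> * (H * \<bar>s / k\<bar> powr \<sigma>)"
        using dilation[of "s / k"] mult_left_mono[OF _ powr_ge_zero] order_trans by blast
      then show ?thesis
        using k by (simp add: powr_divide abs_divide)
    qed
  qed simp
qed

lemma eventually_le_exp_powr_of_dilation_le:
  fixes f :: "real \<Rightarrow> real" and k R D r \<tau> :: real
  assumes k: "1 < k" and R: "1 \<le> R" and \<tau>: "log k R < \<tau>" and D: "1 \<le> D"
    and f_ge_1: "\<And>t. 1 \<le> f t"
    and f_le_exp: "\<And>t. f t \<le> exp (\<bar>t\<bar> * r)"
    and dilation: "\<And>t. f (k * t) \<le> D * f t powr R"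
  shows "\<exists>M. \<forall>t. M \<le> \<bar>t\<bar> \<longrightarrow> f t \<le> exp (\<bar>t\<bar> powr \<tau>)"
proof -
  have f_pos: "0 < f t" for t
    using f_ge_1[of t] by simp
  define \<sigma> where "\<sigma> = (log k R + \<tau>) / 2"
  \<comment> \<open>c absorbs the additive ln D, turning the dilation inequality into h (k t) \<le> k^\<sigma> h t.\<close>
  define c where "c = ln D / (k powr \<sigma> - 1)"
  define h where "h t = ln (f t) + c" for t
  define H where "H = k * r + c"
  have log_R: "0 \<le> log k R" "R = k powr log k R"
    using k R by auto
  have \<sigma>: "0 \<le> \<sigma>" "\<sigma> < \<tau>" "log k R < \<sigma>"
    using log_R \<tau> unfolding \<sigma>_def by auto
  have R_less: "R < k powr \<sigma>"
    using powr_less_mono[OF \<sigma>(3) k] log_R by simp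
  have r: "0 \<le> r"
    using order_trans[OF f_ge_1 f_le_exp, of 1] by simp
  have c: "0 \<le> c"
    using D R R_less unfolding c_def by simp
  have "h (k * t) \<le> k powr \<sigma> * h t" for t
  proof -
    have "ln (f (k * t)) \<le> ln (D * f t powr R)"
      using dilation[of t] f_pos by (rule ln_mono)
    also have "\<dots> = ln D + R * ln (f t)"
      using f_pos[of t] D by (simp add: ln_mult ln_powr)
    also have "\<dots> \<le> ln D + k powr \<sigma> * ln (f t)"
      using R_less f_ge_1[of t] by (intro add_left_mono mult_right_mono) auto
    moreover have "ln D + c = k powr \<sigma> * c"
      using R R_less unfolding c_def by (simp add: field_simps)
    ultimately show ?thesis
      unfolding h_def by (simp add: algebra_simps)
  qed
  moreover have "h s \<le> H" if "\<bar>s\<bar> < k" for s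
  proof -
    have "ln (f s) \<le> \<bar>s\<bar> * r"
      using ln_mono[OF f_le_exp f_pos, of s] by simp
    also have "\<dots> \<le> k * r"
      using that r by (simp add: mult_right_mono)
    finally show ?thesis
      unfolding h_def H_def by simp
  qed
  ultimately have h_le: "h t \<le> H * \<bar>t\<bar> powr \<sigma>" if "1 \<le> \<bar>t\<bar>" for t
    using le_mult_powr_of_dilation_le[OF k \<sigma>(1)] r c k that unfolding H_def by simp
  define M where "M = max 1 (H powr (1 / (\<tau> - \<sigma>)))"
  have "f t \<le> exp (\<bar>t\<bar> powr \<tau>)" if t: "M \<le> \<bar>t\<bar>" for t
  proof -
    have "H \<le> \<bar>t\<bar> powr (\<tau> - \<sigma>)"
    proof -
      have "H = (H powr (1 / (\<tau> - \<sigma>))) powr (\<tau> - \<sigma>)"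
        using r c k \<sigma> unfolding H_def by (simp add: powr_powr)
      also have "\<dots> \<le> \<bar>t\<bar> powr (\<tau> - \<sigma>)"
        using t \<sigma> unfolding M_def by (intro powr_mono2) auto
      finally show ?thesis .
    qed
    then have "H * \<bar>t\<bar> powr \<sigma> \<le> \<bar>t\<bar> powr \<tau>"
      using mult_right_mono[of H "\<bar>t\<bar> powr (\<tau> - \<sigma>)" "\<bar>t\<bar> powr \<sigma>"]
      by (simp add: powr_add[symmetric])
    then have "ln (f t) \<le> \<bar>t\<bar> powr \<tau>"
      using h_le[of t] t c unfolding h_def M_def by simp
    then show ?thesis
      using exp_ln[OF f_pos, of t] by (metis exp_le_cancel_iff)
  qed
  then show ?thesis
    by blast
qed

theorem proposition3p5:
  fixes J st :: "'b::{real_normed_algebra,banach} \<Rightarrow> 'b"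
    and A :: "'b set" and nA :: "'b \<Rightarrow> real"
    and k :: nat and p q \<tau> :: real and a :: 'b
  assumes "differential_subalgebra J st A nA k p q"
    and "a \<in> A" and "st a = a"
    and "\<tau> > log (real k) (max (real k - 1) p)"
  shows "\<exists>C M. \<forall>t::real. \<bar>t\<bar> \<ge> M \<longrightarrow> nA (uA J A nA (t *\<^sub>R a)) \<le> C * exp (\<bar>t\<bar> powr \<tau>)"
proof -
  interpret cstar_subalgebra_selfadjoint J st A nA a
    using assms(1-3) by unfold_locales (auto simp: differential_subalgebra_def)
  have k: "2 \<le> k" and pq: "0 \<le> p" "0 \<le> q"
    using assms(1) by (auto simp: differential_subalgebra_def)
  obtain C where C: "0 \<le> C" "\<And>x. x \<in> A \<Longrightarrow> nA (spow x (k - 1)) \<le> C * nA x powr p * norm x powr q"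
    using assms(1) unfolding differential_subalgebra_def by (metis less_eq_real_def)
  define f where "f t = max 1 (nA (u t))" for t
  have "\<exists>M. \<forall>t. M \<le> \<bar>t\<bar> \<longrightarrow> f t \<le> exp (\<bar>t\<bar> powr \<tau>)"
  proof (rule eventually_le_exp_powr_of_dilation_le)
    show "1 < real k" "1 \<le> max (real k - 1) p"
      using k by auto
    show "log (real k) (max (real k - 1) p) < \<tau>"
      using assms(4) .
    show "1 \<le> 2 ^ k + C * 2 powr q"
      using C(1) one_le_power[of "2::real" k] by (simp add: add_increasing2)
    show "1 \<le> f t" "f t \<le> exp (\<bar>t\<bar> * nA a)" for t
      using nA_u_le[of t] nA_nonneg[OF a_in_A] unfolding f_def by auto
    show "f (real k * t) \<le> (2 ^ k + C * 2 powr q) * f t powr max (real k - 1) p" for t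
      unfolding f_def by (rule max_1_nA_u_dilation_le[OF k pq C])
  qed
  then show ?thesis
    unfolding f_def u_def by (metis max.cobounded2 mult_1 order_trans)
qed

end
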